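(* Let $w$ be a string of length $n$ and $i$ a position of $w$ with $i-\mu(i)\ge1$, $i+\mu(i)-1\le n$ and $\mu(i)>1$. Fix an integer $j$ with $i<j<i+\mu(i)$. Then for every $h$ with $i<h\le j$ and $\mu(h)>1$, we have $\mu(h)\le\max\{\mu(h') : i<h'\le j \text{ and } h'-\mu(h')<i\}$.
   Context: For a position $i\in\{1,\dots,n\}$ of $w$, the local period $\mu(i)$ is the least positive integer $\mu$ such that $w[j]=w[j+\mu]$ for all $j$ with $\max\{1,i-\mu\}\le j$ and $j+\mu\le\min\{n,i+\mu-1\}$. The maximum of the empty set is taken to be $-\infty$ (so the claim in particular asserts the set is nonempty whenever such an $h$ exists). *)

theory Defs
  imports Main
begin

(* Strings are lists; positions are 1-based: w[j] = w ! (j - 1). *)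
definition local_period :: "'a list \<Rightarrow> nat \<Rightarrow> nat" where
  "local_period w i = (LEAST \<mu>. 0 < \<mu> \<and>
     (\<forall>j::nat. max 1 (int i - int \<mu>) \<le> int j \<and> j + \<mu> \<le> min (length w) (i + \<mu> - 1)
        \<longrightarrow> w ! (j - 1) = w ! (j + \<mu> - 1)))"

end

theory Submission
  imports Defs "HOL-Library.List_Lexorder"
begin

text \<open>
  Let q = \<mu>(h) > 1 and suppose h - q \<ge> i \<ge> 1. The factor of w around h of radius q has
  period q, while no shorter repetition is centred at h. A maximal-suffix argument as in the
  Critical Factorization Theorem, run for a lexicographic order and its reverse, yields a
  position g with h - q < g < h at which no repetition shorter than q is centred either, so
  \<mu>(g) \<ge> \<mu>(h). Iterating this leftward step ends at a position h' > i with h' - \<mu>(h') < i.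
\<close>

text \<open>
  Positions are 0-based: the centre c lies between y ! (c - 1) and y ! c, and a repetition is
  clipped at both ends of y.
\<close>

definition local_repetition :: "'a list \<Rightarrow> nat \<Rightarrow> nat \<Rightarrow> bool" where
  "local_repetition y c r \<longleftrightarrow> (\<forall>k. c - r \<le> k \<and> k < c \<and> k + r < length y \<longrightarrow> y ! k = y ! (k + r))"

definition has_period :: "'a list \<Rightarrow> nat \<Rightarrow> bool" where
  "has_period y r \<longleftrightarrow> (\<forall>k. k + r < length y \<longrightarrow> y ! k = y ! (k + r))"

lemma has_period_imp_local_repetition: "has_period y r \<Longrightarrow> local_repetition y c r"
  unfolding has_period_def local_repetition_def by auto

lemma local_repetition_map_inj:
  "inj_on f (set y) \<Longrightarrow> local_repetition (map f y) c r \<longleftrightarrow> local_repetition y c r"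
  by (auto simp: local_repetition_def inj_on_eq_iff)

lemma has_period_map_inj:
  "inj_on f (set y) \<Longrightarrow> has_period (map f y) r \<longleftrightarrow> has_period y r"
  by (auto simp: has_period_def inj_on_eq_iff)

lemma nth_drop_take:
  assumes "k < length (drop a (take b w))"
  shows "drop a (take b w) ! k = w ! (a + k)"
proof -
  have "a + k < b" "a \<le> length w" using assms by auto
  then show ?thesis by (simp add: drop_take)
qed

lemma local_repetition_factor:
  assumes "local_repetition w (a + c) r"
  shows "local_repetition (drop a (take b w)) c r"
  unfolding local_repetition_def
proof (intro allI impI)
  fix k assume k: "c - r \<le> k \<and> k < c \<and> k + r < length (drop a (take b w))"
  then have k1: "k < length (drop a (take b w))" and k2: "k + r < length (drop a (take b w))"
    by linarith+
  from k have "a + c - r \<le> a + k \<and> a + k < a + c \<and> a + k + r < length w"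
    by auto
  then have "w ! (a + k) = w ! (a + k + r)"
    using assms unfolding local_repetition_def by blast
  then show "drop a (take b w) ! k = drop a (take b w) ! (k + r)"
    unfolding nth_drop_take[OF k1] nth_drop_take[OF k2] by (simp add: add.assoc)
qed

lemma local_repetition_from_factor:
  assumes "local_repetition (drop a (take b w)) c r" and "r \<le> c" and "a + c + r \<le> b"
  shows "local_repetition w (a + c) r"
  unfolding local_repetition_def
proof (intro allI impI)
  fix k assume k: "a + c - r \<le> k \<and> k < a + c \<and> k + r < length w"
  then have "c - r \<le> k - a \<and> k - a < c \<and> k - a + r < length (drop a (take b w))"
    using assms(2,3) by auto
  then have "drop a (take b w) ! (k - a) = drop a (take b w) ! (k - a + r)"
    using assms(1) unfolding local_repetition_def by blast
  moreover have "drop a (take b w) ! (k - a) = w ! k"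
    and "drop a (take b w) ! (k - a + r) = w ! (k + r)"
    using k assms(2,3) nth_drop_take[of "k - a"] nth_drop_take[of "k - a + r"] by auto
  ultimately show "w ! k = w ! (k + r)" by simp
qed

lemma local_repetition_imp_period_factor:
  assumes "local_repetition w c q" and "q \<le> c"
  shows "has_period (drop (c - q) (take (c + q) w)) q"
  unfolding has_period_def
proof (intro allI impI)
  fix k assume "k + q < length (drop (c - q) (take (c + q) w))"
  then have "c - q \<le> c - q + k \<and> c - q + k < c \<and> c - q + k + q < length w"
    using assms(2) by auto
  then have "w ! (c - q + k) = w ! (c - q + k + q)"
    using assms(1) unfolding local_repetition_def by blast
  moreover have "drop (c - q) (take (c + q) w) ! k = w ! (c - q + k)"
    and "drop (c - q) (take (c + q) w) ! (k + q) = w ! (c - q + k + q)"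
    using nth_drop_take[of k] nth_drop_take[OF \<open>k + q < _\<close>] \<open>k + q < _\<close>
    by (simp_all add: add.assoc less_diff_conv)
  ultimately show "drop (c - q) (take (c + q) w) ! k = drop (c - q) (take (c + q) w) ! (k + q)"
    by simp
qed

lemma append_le_append_iff: "u @ t \<le> u @ s \<longleftrightarrow> t \<le> s"
  for u :: "'a::linorder list"
  by (induction u) auto

lemma less_append_nonempty: "s \<noteq> [] \<Longrightarrow> v < v @ s"
  for v :: "'a::linorder list"
  by (induction v) (auto simp: neq_Nil_conv)

lemma prefix_if_le_in_both_orders:
  fixes t v :: "int list"
  assumes "t \<le> v" and "map uminus t \<le> map uminus v"
  shows "\<exists>s. v = t @ s"
  using assms
proof (induction t arbitrary: v)
  case (Cons a t)
  then obtain b v' where "v = b # v'" by (cases v) auto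
  with Cons show ?case by auto
qed simp

definition max_suffix :: "'a::linorder list \<Rightarrow> nat \<Rightarrow> bool" where
  "max_suffix y c \<longleftrightarrow> c \<le> length y \<and> (\<forall>d. drop d y \<le> drop c y)"

lemma ex_max_suffix: "\<exists>c. max_suffix y c"
proof -
  let ?S = "(\<lambda>d. drop d y) ` {..length y}"
  have "Max ?S \<in> ?S" by (intro Max_in) auto
  then obtain c where c: "c \<le> length y" "Max ?S = drop c y"
    by (auto simp del: Max_in)
  have "drop d y \<le> drop c y" for d
  proof (cases "d \<le> length y")
    case True
    then have "drop d y \<le> Max ?S" by (intro Max_ge) auto
    then show ?thesis using c(2) by simp
  qed simp
  with c(1) show ?thesis unfolding max_suffix_def by blast
qed

text \<open>
  With drop c y = z t and |z| = r, the repetition makes drop (c - r) y = z z t; maximality of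
  z t then gives z t \<le> t \<le> z t, so z is empty.
\<close>

lemma max_suffix_no_square_before:
  assumes max: "max_suffix y c" and "0 < r" "r \<le> c" "c + r \<le> length y"
    and rep: "local_repetition y c r"
  shows False
proof -
  define z where "z = take r (drop c y)"
  define t where "t = drop (c + r) y"
  have zt: "drop c y = z @ t"
    unfolding z_def t_def by (metis add.commute append_take_drop_id drop_drop)
  have zzt: "drop (c - r) y = z @ drop c y"
  proof (rule nth_equalityI)
    show "length (drop (c - r) y) = length (z @ drop c y)"
      using assms by (simp add: z_def)
    fix k assume k: "k < length (drop (c - r) y)"
    show "drop (c - r) y ! k = (z @ drop c y) ! k"
    proof (cases "k < r")
      case True
      then have "c - r \<le> c - r + k \<and> c - r + k < c \<and> c - r + k + r < length y"
        using assms(3,4) by auto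
      then have "y ! (c - r + k) = y ! (c - r + k + r)"
        using rep unfolding local_repetition_def by blast
      then show ?thesis using True assms(3,4) by (simp add: z_def nth_append)
    qed (use assms(3,4) in \<open>simp add: z_def nth_append\<close>)
  qed
  have "drop (c - r) y \<le> drop c y" using max unfolding max_suffix_def by blast
  then have "z @ z @ t \<le> z @ t" using zzt zt by simp
  then have "z @ t \<le> t"
    using append_le_append_iff[of z "z @ t" t] by simp
  moreover have "t \<le> z @ t"
    using max zt unfolding max_suffix_def t_def by simp
  ultimately have "z = []" by (simp add: order_antisym)
  then show False using assms(2,4) by (simp add: z_def)
qed

lemma max_suffix_no_overhanging_repetition:
  assumes max: "max_suffix y c" and "0 < r" "r \<le> c" "length y < c + r"
    and rep: "local_repetition y c r"
  shows False
proof -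
  let ?N = "length y"
  have c: "c \<le> ?N" using max unfolding max_suffix_def by simp
  have eq: "drop (c - r) y = drop c y @ drop (?N - r) y"
  proof (rule nth_equalityI)
    show "length (drop (c - r) y) = length (drop c y @ drop (?N - r) y)"
      using assms c by simp
    fix k assume k: "k < length (drop (c - r) y)"
    show "drop (c - r) y ! k = (drop c y @ drop (?N - r) y) ! k"
    proof (cases "k < ?N - c")
      case True
      then have "c - r \<le> c - r + k \<and> c - r + k < c \<and> c - r + k + r < length y"
        using assms(3,4) by auto
      then have "y ! (c - r + k) = y ! (c - r + k + r)"
        using rep unfolding local_repetition_def by blast
      then show ?thesis using True assms(3) by (simp add: nth_append)
    next
      case False
      then have "c - r + k = ?N - r + (k - (?N - c))" using assms(3,4) c by simp
      then show ?thesis using k False c by (simp add: nth_append)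
    qed
  qed
  moreover have "drop (?N - r) y \<noteq> []" using assms(2,3,4) c by simp
  ultimately have "drop c y < drop (c - r) y" using less_append_nonempty[of _ "drop c y"] by simp
  with max show False unfolding max_suffix_def by (simp add: not_le[symmetric])
qed

lemma max_suffix_no_repetition_within:
  assumes "max_suffix y c" and "0 < r" and "r \<le> c" and "local_repetition y c r"
  shows False
proof (cases "c + r \<le> length y")
  case True
  then show False using max_suffix_no_square_before assms by blast
next
  case False
  then show False using max_suffix_no_overhanging_repetition[OF assms(1-3) _ assms(4)] by simp
qed

lemma max_suffix_less_period:
  "max_suffix y c \<Longrightarrow> has_period y q \<Longrightarrow> 0 < q \<Longrightarrow> c < q"
  using max_suffix_no_repetition_within has_period_imp_local_repetition not_le by blast

text \<open>
  Here c' is a maximal suffix position for the reversed order: writing drop c' y = u v with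
  v = drop c y, the repetition gives drop (c' + r) y = u t with t = drop (c + r) y, and the two
  maximality conditions force t \<le> v in both orders, so t is a prefix of v.
\<close>

lemma max_suffix_long_repetition_imp_period:
  fixes y :: "int list"
  assumes max: "max_suffix y c" and max': "max_suffix (map uminus y) c'" and "c' \<le> c"
    and "c < r" "c + r \<le> length y" and rep: "local_repetition y c r"
  shows "has_period y r"
proof -
  define u where "u = drop c' (take c y)"
  define t where "t = drop (c + r) y"
  define v where "v = drop c y"
  have "drop c' y = drop c' (take c y @ drop c y)" by (simp only: append_take_drop_id)
  also have "\<dots> = u @ v" unfolding drop_append using assms(3,5) by (simp add: u_def v_def)
  finally have uv: "drop c' y = u @ v" .
  have ut: "drop (c' + r) y = u @ t"
  proof (rule nth_equalityI)
    show "length (drop (c' + r) y) = length (u @ t)"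
      using assms(3,4,5) by (simp add: u_def t_def)
    fix k assume k: "k < length (drop (c' + r) y)"
    show "drop (c' + r) y ! k = (u @ t) ! k"
    proof (cases "k < c - c'")
      case True
      then have "c - r \<le> c' + k \<and> c' + k < c \<and> c' + k + r < length y"
        using assms(3,4,5) by auto
      then have "y ! (c' + k) = y ! (c' + k + r)"
        using rep unfolding local_repetition_def by blast
      moreover have "k < length u" using True assms(3,4,5) by (simp add: u_def)
      ultimately show ?thesis
        using k nth_drop_take[of k c' c y] by (simp add: u_def nth_append add_ac)
    next
      case False
      then show ?thesis using k assms(3,4) by (simp add: u_def t_def nth_append add_ac)
    qed
  qed
  have "drop (c' + r) (map uminus y) \<le> drop c' (map uminus y)"
    using max' unfolding max_suffix_def by blast
  then have "map uminus (u @ t) \<le> map uminus (u @ v)"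
    using uv ut by (simp add: drop_map)
  then have "map uminus t \<le> map uminus v"
    using append_le_append_iff[of "map uminus u"] by simp
  moreover have "t \<le> v"
    using max unfolding max_suffix_def t_def v_def by blast
  ultimately obtain s where vs: "v = t @ s"
    using prefix_if_le_in_both_orders by blast
  show ?thesis
    unfolding has_period_def
  proof (intro allI impI)
    fix k assume k: "k + r < length y"
    show "y ! k = y ! (k + r)"
    proof (cases "k < c")
      case True
      then show ?thesis using rep k assms(4) unfolding local_repetition_def by auto
    next
      case False
      then have "k - c < length t" using k by (simp add: t_def)
      then have "v ! (k - c) = t ! (k - c)" using vs by (simp add: nth_append)
      then show ?thesis using False k by (simp add: v_def t_def add.commute)
    qed
  qed
qed

lemma max_suffix_repetition_imp_period:
  fixes y :: "int list"
  assumes max: "max_suffix y c" and max': "max_suffix (map uminus y) c'" and "c' \<le> c"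
    and "0 < r" and rep: "local_repetition y c r"
  shows "has_period y r"
proof -
  have "c < r" using max_suffix_no_repetition_within[OF max assms(4) _ rep] not_less by blast
  show ?thesis
  proof (cases "c + r \<le> length y")
    case True
    then show ?thesis using max_suffix_long_repetition_imp_period[OF max max' assms(3) \<open>c < r\<close>] rep
      by blast
  next
    case False
    then show ?thesis using rep \<open>c < r\<close> unfolding local_repetition_def has_period_def by auto
  qed
qed

lemma critical_position_exists_int:
  fixes y :: "int list"
  assumes period: "has_period y q" and "2 \<le> q"
    and no_rep: "\<forall>m. 0 < m \<and> m < q \<longrightarrow> \<not> local_repetition y q m"
  shows "\<exists>c. 0 < c \<and> c < q \<and> (\<forall>m. 0 < m \<and> m < q \<longrightarrow> \<not> local_repetition y c m)"
proof -
  obtain c1 c2 where c1: "max_suffix y c1" and c2: "max_suffix (map uminus y) c2"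
    using ex_max_suffix by blast
  have c1': "max_suffix (map uminus (map uminus y)) c1" using c1 by (simp add: comp_def)
  define c where "c = max c1 c2"
  have rep_period: "has_period y m" if "0 < m" "local_repetition y c m" for m
  proof (cases "c2 \<le> c1")
    case True
    then show ?thesis
      using max_suffix_repetition_imp_period[OF c1 c2 True that(1)] that(2) c_def by simp
  next
    case False
    then have "has_period (map uminus y) m"
      using max_suffix_repetition_imp_period[OF c2 c1' _ that(1)] that(2) c_def
      by (simp add: local_repetition_map_inj)
    then show ?thesis by (simp add: has_period_map_inj)
  qed
  have no_short_period: "\<not> has_period y m" if "0 < m" "m < q" for m
    using no_rep that has_period_imp_local_repetition by blast
  have "0 < c"
  proof (rule ccontr)
    assume "\<not> 0 < c"
    then have "local_repetition y c 1" unfolding local_repetition_def by simp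
    then show False using rep_period[of 1] no_short_period[of 1] assms(2) by simp
  qed
  moreover have "c < q"
    using max_suffix_less_period[OF c1 period] max_suffix_less_period[OF c2] period assms(2)
    by (simp add: c_def has_period_map_inj)
  ultimately show ?thesis using rep_period no_short_period by blast
qed

text \<open>
  Only equality of letters matters, so the alphabet is encoded injectively into int, where
  map uminus supplies the reverse order.
\<close>

lemma critical_position_exists:
  fixes y :: "'a list"
  assumes "has_period y q" and "2 \<le> q"
    and "\<forall>m. 0 < m \<and> m < q \<longrightarrow> \<not> local_repetition y q m"
  shows "\<exists>c. 0 < c \<and> c < q \<and> (\<forall>m. 0 < m \<and> m < q \<longrightarrow> \<not> local_repetition y c m)"
proof -
  obtain f :: "'a \<Rightarrow> nat" and n where "inj_on f (set y)"
    using finite_imp_inj_to_nat_seg[of "set y"] by blast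
  then have inj: "inj_on (int \<circ> f) (set y)" by (simp add: inj_on_def)
  show ?thesis
    using critical_position_exists_int[of "map (int \<circ> f) y" q] assms
    by (simp add: local_repetition_map_inj[OF inj] has_period_map_inj[OF inj])
qed

lemma local_repetition_left_step:
  assumes rep: "local_repetition w c q" and "2 \<le> q" "q \<le> c"
    and no_rep: "\<forall>m. 0 < m \<and> m < q \<longrightarrow> \<not> local_repetition w c m"
  shows "\<exists>g. c - q < g \<and> g < c \<and> (\<forall>m. 0 < m \<and> m < q \<longrightarrow> \<not> local_repetition w g m)"
proof -
  define y where "y = drop (c - q) (take (c + q) w)"
  have "has_period y q"
    unfolding y_def by (rule local_repetition_imp_period_factor[OF rep assms(3)])
  moreover have "\<not> local_repetition y q m" if "0 < m" "m < q" for m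
  proof
    assume "local_repetition y q m"
    then have "local_repetition w (c - q + q) m"
      unfolding y_def using that assms(3) by (intro local_repetition_from_factor) auto
    then show False using no_rep that assms(3) by simp
  qed
  ultimately obtain c' where c': "0 < c'" "c' < q"
    "\<forall>m. 0 < m \<and> m < q \<longrightarrow> \<not> local_repetition y c' m"
    using critical_position_exists assms(2) by blast
  have "\<not> local_repetition w (c - q + c') m" if "0 < m" "m < q" for m
    using c'(3) that local_repetition_factor unfolding y_def by blast
  then show ?thesis using c'(1,2) assms(3) by (intro exI[of _ "c - q + c'"]) auto
qed

text \<open>The 1-based position i of the definition is the 0-based centre i - 1.\<close>

lemma local_period_eq_Least:
  "local_period w i = (LEAST r. 0 < r \<and> local_repetition w (i - 1) r)"
proof -
  have eq: "(\<forall>j::nat. max 1 (int i - int r) \<le> int j \<and> j + r \<le> min (length w) (i + r - 1)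
          \<longrightarrow> w ! (j - 1) = w ! (j + r - 1)) \<longleftrightarrow> local_repetition w (i - 1) r" if "0 < r" for r
  proof
    assume L: "\<forall>j::nat. max 1 (int i - int r) \<le> int j \<and> j + r \<le> min (length w) (i + r - 1)
          \<longrightarrow> w ! (j - 1) = w ! (j + r - 1)"
    show "local_repetition w (i - 1) r"
      unfolding local_repetition_def
    proof (intro allI impI)
      fix k assume "i - 1 - r \<le> k \<and> k < i - 1 \<and> k + r < length w"
      then have "max 1 (int i - int r) \<le> int (k + 1) \<and> k + 1 + r \<le> min (length w) (i + r - 1)"
        by linarith
      then show "w ! k = w ! (k + r)" using L by fastforce
    qed
  next
    assume R: "local_repetition w (i - 1) r"
    show "\<forall>j::nat. max 1 (int i - int r) \<le> int j \<and> j + r \<le> min (length w) (i + r - 1)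
          \<longrightarrow> w ! (j - 1) = w ! (j + r - 1)"
    proof (intro allI impI)
      fix j :: nat assume "max 1 (int i - int r) \<le> int j \<and> j + r \<le> min (length w) (i + r - 1)"
      then have "i - 1 - r \<le> j - 1 \<and> j - 1 < i - 1 \<and> j - 1 + r < length w"
        and "j + r - 1 = j - 1 + r"
        by linarith+
      then show "w ! (j - 1) = w ! (j + r - 1)"
        using R unfolding local_repetition_def by presburger
    qed
  qed
  show ?thesis
    unfolding local_period_def by (intro arg_cong[where f = Least] ext) (use eq in blast)
qed

lemma local_period_le: "0 < m \<Longrightarrow> local_repetition w (i - 1) m \<Longrightarrow> local_period w i \<le> m"
  unfolding local_period_eq_Least by (rule Least_le) simp

lemma local_period_pos_repetition:
  "0 < local_period w i \<and> local_repetition w (i - 1) (local_period w i)"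
proof -
  have "0 < length w + 1 \<and> local_repetition w (i - 1) (length w + 1)"
    by (simp add: local_repetition_def)
  then show ?thesis
    unfolding local_period_eq_Least
    by (rule LeastI[where P = "\<lambda>r. 0 < r \<and> local_repetition w (i - 1) r"])
qed

lemma le_local_period_iff:
  "q \<le> local_period w i \<longleftrightarrow> (\<forall>m. 0 < m \<and> m < q \<longrightarrow> \<not> local_repetition w (i - 1) m)"
proof (intro iffI allI impI notI)
  fix m assume "q \<le> local_period w i" "0 < m \<and> m < q" "local_repetition w (i - 1) m"
  then show False using local_period_le[of m w i] by linarith
next
  assume "\<forall>m. 0 < m \<and> m < q \<longrightarrow> \<not> local_repetition w (i - 1) m"
  then show "q \<le> local_period w i" using local_period_pos_repetition not_le by blast
qed

lemma local_period_left_step: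
  assumes "1 < local_period w h" and "local_period w h < h"
  shows "\<exists>g. h - local_period w h < g \<and> g < h \<and> local_period w h \<le> local_period w g"
proof -
  let ?q = "local_period w h"
  have "local_repetition w (h - 1) ?q"
    using local_period_pos_repetition by blast
  moreover have "\<forall>m. 0 < m \<and> m < ?q \<longrightarrow> \<not> local_repetition w (h - 1) m"
    using le_local_period_iff[of ?q w h] by simp
  moreover have "2 \<le> ?q" "?q \<le> h - 1" using assms by simp_all
  ultimately obtain g where g: "h - 1 - ?q < g" "g < h - 1"
      "\<forall>m. 0 < m \<and> m < ?q \<longrightarrow> \<not> local_repetition w g m"
    using local_repetition_left_step[of w "h - 1" ?q] by blast
  have "?q \<le> local_period w (g + 1)"
    using g(3) le_local_period_iff[of ?q w "g + 1"] by simp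
  then show ?thesis using g(1,2) by (intro exI[of _ "g + 1"]) auto
qed

lemma local_period_reaches_left:
  assumes "1 \<le> i" and "i < h" and "1 < local_period w h"
  shows "\<exists>h'. i < h' \<and> h' \<le> h \<and> int h' - int (local_period w h') < int i
              \<and> local_period w h \<le> local_period w h'"
  using assms(2,3)
proof (induction h rule: less_induct)
  case (less h)
  show ?case
  proof (cases "int h - int (local_period w h) < int i")
    case True
    then show ?thesis using less.prems by auto
  next
    case False
    then have "local_period w h < h" using assms(1) by linarith
    then obtain g where g: "h - local_period w h < g" "g < h" "local_period w h \<le> local_period w g"
      using local_period_left_step[of w h] less.prems(2) by blast
    moreover have "i < g" using g(1) False by linarith
    moreover have "1 < local_period w g" using g(3) less.prems(2) by linarith
    ultimately obtain h' where "i < h'" "h' \<le> g" "int h' - int (local_period w h') < int i"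
        "local_period w g \<le> local_period w h'"
      using less.IH[of g] by blast
    with g show ?thesis by (intro exI[of _ h']) auto
  qed
qed

text \<open>Only 1 \<le> i, i < h \<le> j and \<mu>(h) > 1 are needed.\<close>

theorem lemma9:
  fixes w :: "'a list" and i j h :: nat
  assumes "1 \<le> i" and "i \<le> length w"
    and "int i - int (local_period w i) \<ge> 1"
    and "i + local_period w i - 1 \<le> length w"
    and "local_period w i > 1"
    and "i < j" and "j < i + local_period w i"
    and "i < h" and "h \<le> j" and "local_period w h > 1"
  shows "{h'. i < h' \<and> h' \<le> j \<and> int h' - int (local_period w h') < int i} \<noteq> {} \<and>
         local_period w h \<le> Max (local_period w ` {h'. i < h' \<and> h' \<le> j \<and> int h' - int (local_period w h') < int i})"
proof -
  let ?S = "{h'. i < h' \<and> h' \<le> j \<and> int h' - int (local_period w h') < int i}"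
  obtain h' where h': "i < h'" "h' \<le> h" "int h' - int (local_period w h') < int i"
      "local_period w h \<le> local_period w h'"
    using local_period_reaches_left[OF assms(1,8,10)] by blast
  then have "h' \<in> ?S" using assms(9) by simp
  moreover have "finite ?S" by (rule finite_subset[of _ "{..j}"]) auto
  ultimately have "local_period w h' \<le> Max (local_period w ` ?S)" by (intro Max_ge) auto
  with h'(4) have "local_period w h \<le> Max (local_period w ` ?S)" by (rule le_trans)
  with \<open>h' \<in> ?S\<close> show ?thesis by blast
qed

end
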